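(* Let $G$ be a finite simple graph and $e$ a pair of distinct vertices of $G$. For each $i\ge0$, $$a_i(G+e)=a_i(G)+\sum_{J\in\mathcal{E}\mathcal{C}(G+e)\setminus\mathcal{E}\mathcal{C}(G)}|b(G|_J)|\cdot a_{i-\frac{|J|}{2}}\big((G+e)^\ast_J\big).$$
   Context: All graphs are finite simple graphs; $G|_I$ is the induced subgraph on $I\subseteq V(G)$. The signed $a$-number: $sa(\emptyset)=1$ for the null graph; if $G$ has connected components $G_1,\dots,G_\ell$, $sa(G)=\prod_k sa(G_k)$; if $G$ is connected and nonempty, $sa(G)=-\sum_{I\subsetneq V(G)}sa(G|_I)$ when $|V(G)|$ is even and $sa(G)=0$ when $|V(G)|$ is odd. The $a$-number is $a(G)=|sa(G)|$; for an integer $i$, $a_i(G)=\sum_{I\subseteq V(G),\,|I|=2i}a(G|_I)$ (so $a_i(G)=0$ if $i<0$ or $2i>|V(G)|$). The $b$-number is $b(G)=\sum_{I\subseteq V(G)}sa(G|_I)$. $\mathcal{E}\mathcal{C}(G)=\{I\subseteq V(G): G|_I\text{ has no connected component of odd order}\}$. $G+e$ is $G$ with $e$ added as an edge ($G+e=G$ if $e\in E(G)$). The reconnected complement $H^\ast_J$ of $J\subseteq V(H)$ is the graph on $V(H)\setminus J$ in which $\{a,b\}$ is an edge iff there is a path from $a$ to $b$ in $H|_{J\cup\{a,b\}}$. *)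

theory Defs
  imports Main
begin

type_synonym 'a graph = "'a set \<times> 'a set set"

definition verts :: "'a graph \<Rightarrow> 'a set" where "verts G = fst G"
definition edges :: "'a graph \<Rightarrow> 'a set set" where "edges G = snd G"

definition simple_graph :: "'a graph \<Rightarrow> bool" where
  "simple_graph G \<longleftrightarrow> finite (verts G) \<and>
     (\<forall>e\<in>edges G. \<exists>x y. e = {x, y} \<and> x \<noteq> y \<and> x \<in> verts G \<and> y \<in> verts G)"

definition induce :: "'a graph \<Rightarrow> 'a set \<Rightarrow> 'a graph" where
  "induce G I = (I, {e \<in> edges G. e \<subseteq> I})"

definition adj_rel :: "'a graph \<Rightarrow> ('a \<times> 'a) set" where
  "adj_rel G = {(x, y). x \<in> verts G \<and> y \<in> verts G \<and> {x, y} \<in> edges G}"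

definition reachable :: "'a graph \<Rightarrow> 'a \<Rightarrow> 'a \<Rightarrow> bool" where
  "reachable G x y \<longleftrightarrow> x \<in> verts G \<and> y \<in> verts G \<and> (x, y) \<in> (adj_rel G)\<^sup>*"

definition component_of :: "'a graph \<Rightarrow> 'a \<Rightarrow> 'a set" where
  "component_of G x = {y. reachable G x y}"

definition components :: "'a graph \<Rightarrow> 'a set set" where
  "components G = component_of G ` verts G"

definition connected_graph :: "'a graph \<Rightarrow> bool" where
  "connected_graph G \<longleftrightarrow> verts G \<noteq> {} \<and> (\<forall>x\<in>verts G. \<forall>y\<in>verts G. reachable G x y)"

text \<open>The recursion
  decreases the number of vertices; we implement it with a fuel argument, and
  sa G uses fuel card (verts G), which suffices (components of a disconnected
  graph and proper induced subgraphs have strictly fewer vertices).\<close>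
fun sa_aux :: "nat \<Rightarrow> 'a graph \<Rightarrow> int" where
  "sa_aux 0 G = 1"
| "sa_aux (Suc n) G =
     (if verts G = {} then 1
      else if \<not> connected_graph G then (\<Prod>C\<in>components G. sa_aux n (induce G C))
      else if odd (card (verts G)) then 0
      else - (\<Sum>I\<in>{I. I \<subset> verts G}. sa_aux n (induce G I)))"

definition sa :: "'a graph \<Rightarrow> int" where
  "sa G = sa_aux (card (verts G)) G"

definition a_num :: "'a graph \<Rightarrow> int" where
  "a_num G = \<bar>sa G\<bar>"

text \<open>a_i(G) for an integer index i (zero if i < 0 or 2i > |V|).\<close>
definition a_idx :: "'a graph \<Rightarrow> int \<Rightarrow> int" where
  "a_idx G i = (\<Sum>I\<in>{I. I \<subseteq> verts G \<and> int (card I) = 2 * i}. a_num (induce G I))"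

definition b_num :: "'a graph \<Rightarrow> int" where
  "b_num G = (\<Sum>I\<in>{I. I \<subseteq> verts G}. sa (induce G I))"

definition EC :: "'a graph \<Rightarrow> 'a set set" where
  "EC G = {I. I \<subseteq> verts G \<and> (\<forall>C\<in>components (induce G I). even (card C))}"

definition add_edge :: "'a graph \<Rightarrow> 'a set \<Rightarrow> 'a graph" where
  "add_edge G e = (verts G, insert e (edges G))"

definition reconn :: "'a graph \<Rightarrow> 'a set \<Rightarrow> 'a graph" where
  "reconn H J = (verts H - J,
     {{x, y} | x y. x \<in> verts H - J \<and> y \<in> verts H - J \<and> x \<noteq> y \<and>
                    reachable (induce H (J \<union> {x, y})) x y})"

end

(*
  Write sa(I) and b(I) for the signed a-number and the b-number of the induced subgraph on I.
  Both are multiplicative over vertex sets with no edges in between; sa(I) = 0 if G|_I has a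
  component of odd order, and b(I) = 0 if I is nonempty and all components of G|_I are even.
  Adding the edge e changes sa by the deletion formula

    sa_{G+e}(I) = sa_G(I) - sum of b_G(J) * sa_{(G+e)*_J}(I - J)
                             over J <= I with J in EC(G+e) - EC(G),

  proved by induction on |I|: for nonempty I in EC(G+e) both sides sum to zero over the subsets
  of I, because for J in EC(G+e) the set I lies in EC(G+e) iff I - J lies in EC((G+e)*_J).
  A second induction, on |I| and on the number of edges inside I, shows that
  (-1)^(|I|/2) sa(I) >= 0 always, that (-1)^(|I|/2) b(I) >= 0 when G|_I is connected of odd order,
  and that (-1)^(|J|/2) b(J) <= 0 for J in EC(G+e) - EC(G): such a J consists of the two odd
  components joined by e plus even components.  Hence, after multiplication by (-1)^(|I|/2), all
  terms of the deletion formula are nonnegative, so it holds for absolute values; summing over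
  |I| = 2i gives the theorem.
*)
theory Submission
  imports Defs
begin

lemma verts_induce [simp]: "verts (induce G I) = I"
  by (simp add: induce_def verts_def)

lemma edges_induce [simp]: "edges (induce G I) = {e \<in> edges G. e \<subseteq> I}"
  by (simp add: induce_def edges_def)

lemma induce_induce [simp]: "K \<subseteq> I \<Longrightarrow> induce (induce G I) K = induce G K"
  by (auto simp: induce_def edges_def)

lemma verts_add_edge [simp]: "verts (add_edge G e) = verts G"
  by (simp add: add_edge_def verts_def)

lemma edges_add_edge [simp]: "edges (add_edge G e) = insert e (edges G)"
  by (simp add: add_edge_def edges_def)

lemma induce_add_edge_not_subset: "\<not> e \<subseteq> J \<Longrightarrow> induce (add_edge G e) J = induce G J"
  by (auto simp: induce_def add_edge_def edges_def)

lemma verts_reconn [simp]: "verts (reconn H J) = verts H - J"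
  by (simp add: reconn_def verts_def)

lemma edges_reconn:
  "edges (reconn H J) = {{x, y} | x y. x \<in> verts H - J \<and> y \<in> verts H - J \<and> x \<noteq> y \<and>
     reachable (induce H (J \<union> {x, y})) x y}"
  by (simp add: reconn_def edges_def)

lemma adj_rel_induce: "adj_rel (induce G I) = {(x, y). x \<in> I \<and> y \<in> I \<and> {x, y} \<in> edges G}"
  by (auto simp: adj_rel_def)

subsection \<open>Reachability and components\<close>

lemma reachable_refl: "x \<in> verts H \<Longrightarrow> reachable H x x"
  unfolding reachable_def by auto

lemma reachable_sym: "reachable H x y \<Longrightarrow> reachable H y x"
proof -
  have "sym (adj_rel H)"
    by (auto simp: adj_rel_def sym_def insert_commute)
  then have "sym ((adj_rel H)\<^sup>*)"
    by (rule sym_rtrancl)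
  then show "reachable H x y \<Longrightarrow> reachable H y x"
    unfolding reachable_def by (auto dest: symD)
qed

lemma reachable_trans: "reachable H x y \<Longrightarrow> reachable H y z \<Longrightarrow> reachable H x z"
  unfolding reachable_def by auto

lemma rtrancl_adj_rel_induce_mono:
  "A \<subseteq> B \<Longrightarrow> (x, y) \<in> (adj_rel (induce X A))\<^sup>* \<Longrightarrow> (x, y) \<in> (adj_rel (induce X B))\<^sup>*"
  by (rule rtrancl_mono[THEN subsetD]) (auto simp: adj_rel_induce)

lemma reachable_induce_mono:
  "A \<subseteq> B \<Longrightarrow> reachable (induce X A) x y \<Longrightarrow> reachable (induce X B) x y"
  unfolding reachable_def using rtrancl_adj_rel_induce_mono by (metis subsetD verts_induce)

lemma component_of_subset: "component_of H x \<subseteq> verts H"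
  by (auto simp: component_of_def reachable_def)

lemma component_of_self: "x \<in> verts H \<Longrightarrow> x \<in> component_of H x"
  by (auto simp: component_of_def reachable_refl)

lemma component_of_eq: "y \<in> component_of H x \<Longrightarrow> component_of H y = component_of H x"
  unfolding component_of_def using reachable_trans reachable_sym by (metis mem_Collect_eq subsetI subset_antisym)

lemma component_of_disjoint:
  assumes "component_of H x \<noteq> component_of H y"
  shows "component_of H x \<inter> component_of H y = {}"
proof (rule ccontr)
  assume "component_of H x \<inter> component_of H y \<noteq> {}"
  then obtain z where "z \<in> component_of H x" "z \<in> component_of H y"
    by blast
  then have "component_of H x = component_of H y"
    using component_of_eq by metis
  with assms show False ..
qed

lemma components_disjoint:
  assumes "C1 \<in> components H" "C2 \<in> components H" "C1 \<noteq> C2"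
  shows "C1 \<inter> C2 = {}"
proof -
  obtain x y where "C1 = component_of H x" "C2 = component_of H y"
    using assms(1,2) unfolding components_def by blast
  with assms(3) show ?thesis
    using component_of_disjoint by simp
qed

lemma component_eq_if_mem:
  assumes "C \<in> components H" "x \<in> C"
  shows "C = component_of H x"
proof -
  obtain y where "C = component_of H y"
    using assms(1) unfolding components_def by blast
  with assms(2) show ?thesis
    using component_of_eq by metis
qed

lemma connected_graphI:
  assumes "x \<in> verts H" "component_of H x = verts H"
  shows "connected_graph H"
  unfolding connected_graph_def
proof (intro conjI ballI)
  show "verts H \<noteq> {}"
    using assms(1) by blast
  fix y z
  assume "y \<in> verts H" "z \<in> verts H"
  then have "reachable H x y" "reachable H x z"
    using assms(2) by (auto simp: component_of_def)
  then show "reachable H y z"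
    using reachable_sym reachable_trans by metis
qed

lemma component_of_connected:
  assumes "connected_graph H" "x \<in> verts H"
  shows "component_of H x = verts H"
proof
  show "component_of H x \<subseteq> verts H"
    by (rule component_of_subset)
  show "verts H \<subseteq> component_of H x"
    using assms unfolding connected_graph_def component_of_def by blast
qed

lemma components_connected:
  assumes "connected_graph H"
  shows "components H = {verts H}"
proof -
  have "verts H \<noteq> {}"
    using assms by (simp add: connected_graph_def)
  moreover have "components H = (\<lambda>_. verts H) ` verts H"
    unfolding components_def using component_of_connected[OF assms] by (rule image_cong[OF refl])
  ultimately show ?thesis
    by auto
qed

lemma components_psubset:
  assumes "\<not> connected_graph H" "C \<in> components H"
  shows "C \<subset> verts H"
proof -
  obtain x where x: "x \<in> verts H" "C = component_of H x"
    using assms(2) unfolding components_def by blast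
  then show ?thesis
    using assms(1) connected_graphI component_of_subset by (metis psubsetI)
qed

lemma Union_components: "\<Union> (components H) = verts H"
proof
  show "\<Union> (components H) \<subseteq> verts H"
    unfolding components_def by (intro UN_least component_of_subset)
  show "verts H \<subseteq> \<Union> (components H)"
  proof
    fix x
    assume x: "x \<in> verts H"
    show "x \<in> \<Union> (components H)"
      unfolding components_def using x component_of_self[OF x] by (rule UN_I)
  qed
qed

lemma components_induce_subset: "C \<in> components (induce X I) \<Longrightarrow> C \<subseteq> I"
  using Union_components[of "induce X I"] by (metis Union_upper verts_induce)

lemma components_induce_nonempty: "C \<in> components (induce X I) \<Longrightarrow> C \<noteq> {}"
  unfolding components_def using component_of_self by fastforce

lemma finite_components_induce: "finite I \<Longrightarrow> finite (components (induce X I))"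
  by (simp add: components_def)

definition separated :: "'a graph \<Rightarrow> 'a set \<Rightarrow> 'a set \<Rightarrow> bool" where
  "separated X A B \<longleftrightarrow> (\<forall>x\<in>A. \<forall>y\<in>B. {x, y} \<notin> edges X)"

lemma separated_sym: "separated X A B \<Longrightarrow> separated X B A"
  unfolding separated_def by (metis insert_commute)

lemma separated_mono: "separated X A B \<Longrightarrow> A' \<subseteq> A \<Longrightarrow> B' \<subseteq> B \<Longrightarrow> separated X A' B'"
  unfolding separated_def by blast

lemma separated_edges_mono: "separated H A B \<Longrightarrow> edges G \<subseteq> edges H \<Longrightarrow> separated G A B"
  unfolding separated_def by blast

lemma separated_add_edge:
  assumes "separated G A B" "A \<inter> B = {}" "e \<subseteq> A \<or> e \<inter> A = {}"
  shows "separated (add_edge G e) A B"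
  using assms unfolding separated_def by auto

lemma rtrancl_adj_rel_separated:
  assumes "separated X A B" "x \<in> A" "(x, y) \<in> (adj_rel (induce X (A \<union> B)))\<^sup>*"
  shows "y \<in> A \<and> (x, y) \<in> (adj_rel (induce X A))\<^sup>*"
  using assms(3)
proof (induction rule: rtrancl_induct)
  case base
  then show ?case
    using assms(2) by simp
next
  case (step y z)
  then have "y \<in> A" "z \<in> A \<union> B" "{y, z} \<in> edges X"
    by (auto simp: adj_rel_induce)
  with assms(1) have "z \<in> A"
    unfolding separated_def by blast
  with \<open>y \<in> A\<close> \<open>{y, z} \<in> edges X\<close> have "(y, z) \<in> adj_rel (induce X A)"
    by (simp add: adj_rel_induce)
  with step.IH \<open>z \<in> A\<close> show ?case
    by (meson rtrancl.rtrancl_into_rtrancl)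
qed

lemma reachable_Un_separated:
  assumes "separated X A B" "x \<in> A"
  shows "reachable (induce X (A \<union> B)) x y \<longleftrightarrow> reachable (induce X A) x y"
proof
  assume "reachable (induce X (A \<union> B)) x y"
  then show "reachable (induce X A) x y"
    using rtrancl_adj_rel_separated[OF assms] assms(2) unfolding reachable_def by simp
next
  assume "reachable (induce X A) x y"
  then show "reachable (induce X (A \<union> B)) x y"
    by (rule reachable_induce_mono[rotated]) blast
qed

lemma components_Un_separated:
  assumes "separated X A B"
  shows "components (induce X (A \<union> B)) = components (induce X A) \<union> components (induce X B)"
proof -
  have "component_of (induce X (A \<union> B)) ` A = components (induce X A)"
    if "separated X A B" for A B
    unfolding components_def component_of_def
    using reachable_Un_separated[OF that] by (auto intro!: image_cong)
  from this[OF assms] this[OF separated_sym[OF assms]] show ?thesis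
    unfolding components_def by (simp add: image_Un Un_commute)
qed

lemma component_separated:
  assumes "C \<in> components (induce X I)"
  shows "separated X C (I - C)"
  unfolding separated_def
proof (intro ballI notI)
  fix y z
  assume y: "y \<in> C" and z: "z \<in> I - C" and yz: "{y, z} \<in> edges X"
  have "C \<subseteq> I"
    using assms by (rule components_induce_subset)
  with y z yz have "reachable (induce X I) y z"
    unfolding reachable_def by (auto simp: adj_rel_induce)
  then have "z \<in> component_of (induce X I) y"
    by (simp add: component_of_def)
  with z y show False
    using component_eq_if_mem[OF assms y] by simp
qed

lemma component_connected:
  assumes "C \<in> components (induce X I)"
  shows "connected_graph (induce X C)"
proof -
  obtain x where x: "x \<in> C"
    using components_induce_nonempty[OF assms] by blast
  have CI: "C \<union> (I - C) = I"
    using components_induce_subset[OF assms] by blast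
  have "component_of (induce X C) x = component_of (induce X (C \<union> (I - C))) x"
    unfolding component_of_def
    by (rule Collect_cong) (rule reachable_Un_separated[OF component_separated[OF assms] x, symmetric])
  also have "\<dots> = C"
    using component_eq_if_mem[OF assms x] CI by simp
  finally show ?thesis
    using x by (intro connected_graphI[of x]) simp_all
qed

lemma card_eq_sum_components:
  assumes "finite I"
  shows "card I = (\<Sum>C\<in>components (induce X I). card C)"
proof -
  have "finite C" if "C \<in> components (induce X I)" for C
    using components_induce_subset[OF that] assms by (rule finite_subset)
  moreover have "pairwise disjnt (components (induce X I))"
    unfolding pairwise_def disjnt_def using components_disjoint by blast
  ultimately show ?thesis
    using card_Union_disjoint Union_components[of "induce X I"] by fastforce
qed

subsection \<open>Signed numbers of induced subgraphs\<close>

definition sa_on :: "'a graph \<Rightarrow> 'a set \<Rightarrow> int" where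
  "sa_on X I = sa (induce X I)"

definition b_on :: "'a graph \<Rightarrow> 'a set \<Rightarrow> int" where
  "b_on X I = (\<Sum>K\<in>Pow I. sa_on X K)"

lemma sa_aux_fuel:
  "finite (verts G) \<Longrightarrow> card (verts G) \<le> n \<Longrightarrow> card (verts G) \<le> m \<Longrightarrow> sa_aux n G = sa_aux m G"
proof (induction n arbitrary: G m)
  case 0
  then show ?case
    by (cases m) auto
next
  case (Suc n)
  show ?case
  proof (cases m)
    case 0
    with Suc.prems show ?thesis
      by auto
  next
    case (Suc k)
    have fuel: "sa_aux n (induce G C) = sa_aux k (induce G C)" if "C \<subset> verts G" for C
    proof -
      have "card C < card (verts G)"
        using that Suc.prems psubset_card_mono by blast
      then show ?thesis
        using Suc.IH[of "induce G C" k] Suc.prems that \<open>m = Suc k\<close>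
        by (auto intro: finite_subset)
    qed
    then have "\<not> connected_graph G \<Longrightarrow>
        (\<Prod>C\<in>components G. sa_aux n (induce G C)) = (\<Prod>C\<in>components G. sa_aux k (induce G C))"
      using components_psubset by (metis (no_types, lifting) prod.cong)
    moreover have "(\<Sum>I\<in>{I. I \<subset> verts G}. sa_aux n (induce G I)) =
        (\<Sum>I\<in>{I. I \<subset> verts G}. sa_aux k (induce G I))"
      using fuel by (intro sum.cong) auto
    ultimately show ?thesis
      using Suc by simp
  qed
qed

lemma sa_on_empty [simp]: "sa_on X {} = 1"
  by (simp add: sa_on_def sa_def)

lemma sa_on_induce: "K \<subseteq> I \<Longrightarrow> sa_on (induce X I) K = sa_on X K"
  by (simp add: sa_on_def)

lemma sa_on_rec:
  assumes "finite I"
  shows "sa_on X I =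
    (if I = {} then 1
     else if \<not> connected_graph (induce X I) then (\<Prod>C\<in>components (induce X I). sa_on X C)
     else if odd (card I) then 0 else - (\<Sum>K\<in>{K. K \<subset> I}. sa_on X K))"
proof (cases "I = {}")
  case True
  then show ?thesis
    by simp
next
  case False
  then obtain n where n: "card I = Suc n"
    using assms by (cases "card I") auto
  have fuel: "sa_aux n (induce (induce X I) C) = sa_on X C" if "C \<subset> I" for C
  proof -
    have "card C < card I"
      using that assms psubset_card_mono by blast
    then show ?thesis
      using sa_aux_fuel[of "induce X C" n "card C"] that n assms
      by (auto simp: sa_on_def sa_def intro: finite_subset)
  qed
  have "\<not> connected_graph (induce X I) \<Longrightarrow>
      (\<Prod>C\<in>components (induce X I). sa_aux n (induce (induce X I) C)) =
      (\<Prod>C\<in>components (induce X I). sa_on X C)"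
    using fuel components_psubset by (metis (no_types, lifting) prod.cong verts_induce)
  moreover have "(\<Sum>K\<in>{K. K \<subset> I}. sa_aux n (induce (induce X I) K)) = (\<Sum>K\<in>{K. K \<subset> I}. sa_on X K)"
    using fuel by (intro sum.cong) auto
  ultimately show ?thesis
    using False n by (simp add: sa_on_def sa_def)
qed

lemma sa_on_prod_components:
  assumes "finite I"
  shows "sa_on X I = (\<Prod>C\<in>components (induce X I). sa_on X C)"
proof -
  consider "I = {}" | "I \<noteq> {}" "\<not> connected_graph (induce X I)" | "connected_graph (induce X I)"
    by blast
  then show ?thesis
  proof cases
    case 1
    then show ?thesis
      by (simp add: components_def)
  next
    case 2
    then show ?thesis
      using sa_on_rec[OF assms, of X] by simp
  next
    case 3
    then show ?thesis
      using components_connected[OF 3] by simp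
  qed
qed

lemma sa_on_Un_separated:
  assumes "finite A" "finite B" "separated X A B" "A \<inter> B = {}"
  shows "sa_on X (A \<union> B) = sa_on X A * sa_on X B"
proof -
  have "components (induce X A) \<inter> components (induce X B) = {}"
    using assms(4) components_induce_subset components_induce_nonempty by blast
  then show ?thesis
    using sa_on_prod_components[of "A \<union> B" X] sa_on_prod_components[of A X] sa_on_prod_components[of B X]
      assms components_Un_separated[OF assms(3)]
    by (simp add: prod.union_disjoint finite_components_induce)
qed

lemma sa_on_eq_component_times_rest:
  assumes "finite I" "C \<in> components (induce X I)"
  shows "sa_on X I = sa_on X C * sa_on X (I - C)"
  using sa_on_Un_separated[OF _ _ component_separated[OF assms(2)]] assms
    components_induce_subset[OF assms(2)]
  by (metis Diff_disjoint Diff_partition finite_Diff finite_subset)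

lemma sa_on_odd_component:
  assumes "finite I" "C \<in> components (induce X I)" "odd (card C)"
  shows "sa_on X I = 0"
proof -
  have "finite C"
    using components_induce_subset[OF assms(2)] assms(1) by (rule finite_subset)
  then have "sa_on X C = 0"
    using sa_on_rec[of C X] component_connected[OF assms(2)] components_induce_nonempty[OF assms(2)] assms(3)
    by simp
  then show ?thesis
    using sa_on_eq_component_times_rest[OF assms(1,2)] by simp
qed

lemma b_on_empty [simp]: "b_on X {} = 1"
  by (simp add: b_on_def)

lemma sum_Pow_eq_psubsets:
  assumes "finite I"
  shows "(\<Sum>K\<in>Pow I. f K) = f I + (\<Sum>K\<in>{K. K \<subset> I}. f K)"
proof -
  have "Pow I = insert I {K. K \<subset> I}" "finite {K. K \<subset> I}"
    using assms by (auto intro: finite_subset[of _ "Pow I"])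
  then show ?thesis
    by (simp add: sum.insert)
qed

lemma b_on_Un_separated:
  assumes "finite A" "finite B" "separated X A B" "A \<inter> B = {}"
  shows "b_on X (A \<union> B) = b_on X A * b_on X B"
proof -
  have "b_on X (A \<union> B) = (\<Sum>(K1, K2)\<in>Pow A \<times> Pow B. sa_on X (K1 \<union> K2))"
    unfolding b_on_def
    by (rule sum.reindex_bij_witness[where i = "\<lambda>(K1, K2). K1 \<union> K2" and j = "\<lambda>K. (K \<inter> A, K \<inter> B)"])
      (use assms(4) in \<open>auto simp flip: Int_Un_distrib simp: Int_absorb2\<close>)
  also have "\<dots> = (\<Sum>(K1, K2)\<in>Pow A \<times> Pow B. sa_on X K1 * sa_on X K2)"
  proof -
    have "sa_on X (K1 \<union> K2) = sa_on X K1 * sa_on X K2" if "K1 \<subseteq> A" "K2 \<subseteq> B" for K1 K2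
      using assms that by (intro sa_on_Un_separated) (auto intro: finite_subset separated_mono)
    then show ?thesis
      by (intro sum.cong) auto
  qed
  also have "\<dots> = b_on X A * b_on X B"
    unfolding b_on_def sum_product sum.cartesian_product by (simp add: case_prod_beta)
  finally show ?thesis .
qed

lemma b_on_eq_component_times_rest:
  assumes "finite I" "C \<in> components (induce X I)"
  shows "b_on X I = b_on X C * b_on X (I - C)"
  using b_on_Un_separated[OF _ _ component_separated[OF assms(2)]] assms
    components_induce_subset[OF assms(2)]
  by (metis Diff_disjoint Diff_partition finite_Diff finite_subset)

lemma b_on_connected_even:
  assumes "finite C" "C \<noteq> {}" "connected_graph (induce X C)" "even (card C)"
  shows "b_on X C = 0"
  using assms sa_on_rec[OF assms(1), of X] sum_Pow_eq_psubsets[OF assms(1), of "sa_on X"]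
  by (simp add: b_on_def)

definition even_components :: "'a graph \<Rightarrow> 'a set \<Rightarrow> bool" where
  "even_components X I \<longleftrightarrow> (\<forall>C\<in>components (induce X I). even (card C))"

lemma even_components_empty: "even_components X {}"
  by (simp add: even_components_def components_def)

lemma EC_eq: "EC X = {I. I \<subseteq> verts X \<and> even_components X I}"
  by (simp add: EC_def even_components_def)

lemma sa_on_not_even_components: "finite I \<Longrightarrow> \<not> even_components X I \<Longrightarrow> sa_on X I = 0"
  unfolding even_components_def using sa_on_odd_component by blast

lemma b_on_even_components:
  assumes "finite I" "I \<noteq> {}" "even_components X I"
  shows "b_on X I = 0"
proof -
  obtain x where "x \<in> I"
    using assms(2) by blast
  then have C: "component_of (induce X I) x \<in> components (induce X I)"
    by (simp add: components_def)
  have "finite (component_of (induce X I) x)"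
    using components_induce_subset[OF C] assms(1) by (rule finite_subset)
  then have "b_on X (component_of (induce X I) x) = 0"
    using C assms(3) components_induce_nonempty[OF C] component_connected[OF C]
    by (intro b_on_connected_even) (auto simp: even_components_def)
  then show ?thesis
    using b_on_eq_component_times_rest[OF assms(1) C] by simp
qed

lemma even_card_if_even_components:
  assumes "finite I" "even_components X I"
  shows "even (card I)"
  using assms unfolding card_eq_sum_components[OF assms(1), of X] even_components_def
  by (intro dvd_sum) blast

lemma even_components_separated:
  assumes "separated X C (I - C)" "C \<subseteq> I" "even_components X I"
  shows "even_components X C"
proof -
  have "I = C \<union> (I - C)"
    using assms(2) by blast
  then show ?thesis
    using assms components_Un_separated[OF assms(1)] unfolding even_components_def by auto
qed

lemma even_components_add_edge:
  assumes "finite I" "even_components G I"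
  shows "even_components (add_edge G e) I"
  unfolding even_components_def
proof
  fix C
  assume C: "C \<in> components (induce (add_edge G e) I)"
  have "separated G C (I - C)"
    using component_separated[OF C] by (rule separated_edges_mono) auto
  then have "even_components G C"
    using components_induce_subset[OF C] assms(2) by (rule even_components_separated)
  moreover have "finite C"
    using components_induce_subset[OF C] assms(1) by (rule finite_subset)
  ultimately show "even (card C)"
    by (rule even_card_if_even_components[rotated])
qed

lemma even_components_add_edge_not_subset:
  "\<not> e \<subseteq> J \<Longrightarrow> even_components (add_edge G e) J = even_components G J"
  by (simp add: even_components_def induce_add_edge_not_subset)

subsection \<open>The reconnected complement\<close>

lemma reconn_edge_reachable:
  assumes "{a, b} \<in> edges (reconn H J)"
  shows "reachable (induce H (J \<union> {a, b})) a b"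
proof -
  obtain x y where xy: "{a, b} = {x, y}" "reachable (induce H (J \<union> {x, y})) x y"
    using assms unfolding edges_reconn by blast
  then consider "a = x" "b = y" | "a = y" "b = x"
    by (metis doubleton_eq_iff)
  then show ?thesis
    by cases (use xy reachable_sym in \<open>simp_all add: insert_commute\<close>)
qed

lemma reconn_edgeI:
  assumes "a \<in> verts H - J" "b \<in> verts H - J" "a \<noteq> b" "reachable (induce H (J \<union> {a, b})) a b"
  shows "{a, b} \<in> edges (reconn H J)"
  using assms unfolding edges_reconn by blast

lemma reachable_induce_reconnD:
  assumes "J \<subseteq> I" "x \<in> I - J" "reachable (induce (reconn H J) (I - J)) x y"
  shows "reachable (induce H I) x y"
proof -
  have "(x, y) \<in> (adj_rel (induce (reconn H J) (I - J)))\<^sup>*"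
    using assms(3) by (simp add: reachable_def)
  then show ?thesis
  proof (induction rule: rtrancl_induct)
    case base
    then show ?case
      using assms(2) reachable_refl[of x "induce H I"] by simp
  next
    case (step y z)
    then have yz: "y \<in> I - J" "z \<in> I - J" "{y, z} \<in> edges (reconn H J)"
      by (auto simp: adj_rel_induce)
    have "J \<union> {y, z} \<subseteq> I"
      using yz assms(1) by blast
    then have "reachable (induce H I) y z"
      using reconn_edge_reachable[OF yz(3)] by (rule reachable_induce_mono)
    then show ?case
      by (rule reachable_trans[OF step.IH])
  qed
qed

text \<open>Along a path of \<open>H|_I\<close> starting outside \<open>J\<close>, the last vertex \<open>w\<close> outside \<open>J\<close> visited so far
  is reachable in the reconnected complement, and the rest of the path runs inside \<open>J\<close>.\<close>

lemma last_vertex_outside_reachable_reconn: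
  assumes "J \<subseteq> I" "I \<subseteq> verts H" "x \<in> I - J" "(x, y) \<in> (adj_rel (induce H I))\<^sup>*"
  shows "\<exists>w\<in>I - J. reachable (induce (reconn H J) (I - J)) x w \<and> (y \<in> J \<or> y = w) \<and>
    (w, y) \<in> (adj_rel (induce H (J \<union> {w})))\<^sup>*"
  using assms(4)
proof (induction rule: rtrancl_induct)
  case base
  then show ?case
    using assms(3) reachable_refl[of x "induce (reconn H J) (I - J)"] by auto
next
  case (step z y)
  obtain w where w: "w \<in> I - J" "reachable (induce (reconn H J) (I - J)) x w" "z \<in> J \<or> z = w"
    "(w, z) \<in> (adj_rel (induce H (J \<union> {w})))\<^sup>*"
    using step.IH by blast
  have zy: "y \<in> I" "{z, y} \<in> edges H"
    using step.hyps(2) by (auto simp: adj_rel_induce)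
  consider "y \<in> J" | "y = w" | "y \<notin> J" "y \<noteq> w"
    by blast
  then show ?case
  proof cases
    case 1
    then have "(z, y) \<in> adj_rel (induce H (J \<union> {w}))"
      using w(3) zy(2) by (auto simp: adj_rel_induce)
    with w(4) have "(w, y) \<in> (adj_rel (induce H (J \<union> {w})))\<^sup>*"
      by (rule rtrancl_into_rtrancl)
    with w(1,2) 1 show ?thesis
      by blast
  next
    case 2
    with w(1,2) show ?thesis
      by auto
  next
    case 3
    have "(w, z) \<in> (adj_rel (induce H (J \<union> {w, y})))\<^sup>*"
      by (rule rtrancl_adj_rel_induce_mono[OF _ w(4)]) blast
    moreover have "(z, y) \<in> adj_rel (induce H (J \<union> {w, y}))"
      using w(3) zy(2) by (auto simp: adj_rel_induce)
    ultimately have "reachable (induce H (J \<union> {w, y})) w y"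
      by (simp add: reachable_def rtrancl_into_rtrancl)
    then have "(w, y) \<in> adj_rel (induce (reconn H J) (I - J))"
      using reconn_edgeI[of w H J y] w(1) 3 zy(1) assms(2) by (auto simp: adj_rel_induce)
    then have "reachable (induce (reconn H J) (I - J)) x y"
      using reachable_trans[OF w(2)] w(1) 3 zy(1) by (auto simp: reachable_def)
    with 3 zy(1) show ?thesis
      by blast
  qed
qed

lemma reachable_induce_reconnI:
  assumes "J \<subseteq> I" "I \<subseteq> verts H" "x \<in> I - J" "reachable (induce H I) x y" "y \<notin> J"
  shows "reachable (induce (reconn H J) (I - J)) x y"
  using last_vertex_outside_reachable_reconn[OF assms(1-3)] assms(4,5) by (auto simp: reachable_def)

lemma component_of_induce_reconn:
  assumes "J \<subseteq> I" "I \<subseteq> verts H" "x \<in> I - J"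
  shows "component_of (induce (reconn H J) (I - J)) x = component_of (induce H I) x - J"
proof (intro equalityI subsetI)
  fix y
  assume "y \<in> component_of (induce (reconn H J) (I - J)) x"
  then have "reachable (induce (reconn H J) (I - J)) x y"
    by (simp add: component_of_def)
  moreover from this have "y \<notin> J"
    by (simp add: reachable_def)
  ultimately show "y \<in> component_of (induce H I) x - J"
    using reachable_induce_reconnD[OF assms(1,3)] by (simp add: component_of_def)
next
  fix y
  assume "y \<in> component_of (induce H I) x - J"
  then show "y \<in> component_of (induce (reconn H J) (I - J)) x"
    using reachable_induce_reconnI[OF assms] by (simp add: component_of_def)
qed

lemma components_induce_reconn:
  assumes "J \<subseteq> I" "I \<subseteq> verts H"
  shows "components (induce (reconn H J) (I - J)) = (\<lambda>C. C - J) ` components (induce H I) - {{}}"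
proof -
  have "components (induce (reconn H J) (I - J)) = (\<lambda>x. component_of (induce H I) x - J) ` (I - J)"
    unfolding components_def using component_of_induce_reconn[OF assms] by simp
  also have "\<dots> = (\<lambda>C. C - J) ` components (induce H I) - {{}}"
  proof (intro equalityI subsetI)
    fix C'
    assume "C' \<in> (\<lambda>x. component_of (induce H I) x - J) ` (I - J)"
    then obtain x where "x \<in> I - J" "C' = component_of (induce H I) x - J"
      by blast
    then show "C' \<in> (\<lambda>C. C - J) ` components (induce H I) - {{}}"
      using component_of_self[of x "induce H I"] by (auto simp: components_def)
  next
    fix C'
    assume "C' \<in> (\<lambda>C. C - J) ` components (induce H I) - {{}}"
    then obtain C x where C: "C \<in> components (induce H I)" "C' = C - J" "x \<in> C - J"
      by blast
    moreover have "x \<in> I"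
      using C components_induce_subset by blast
    ultimately show "C' \<in> (\<lambda>x. component_of (induce H I) x - J) ` (I - J)"
      using component_eq_if_mem[OF C(1)] by blast
  qed
  finally show ?thesis .
qed

lemma even_card_Int_component:
  assumes "finite J" "even_components H J" "J \<subseteq> I" "C \<in> components (induce H I)"
  shows "even (card (C \<inter> J))"
proof -
  have "separated H (C \<inter> J) (J - C \<inter> J)"
    using component_separated[OF assms(4)] by (rule separated_mono) (use assms(3) in auto)
  then have "even_components H (C \<inter> J)"
    by (rule even_components_separated[OF _ _ assms(2)]) auto
  then show ?thesis
    using assms(1) by (intro even_card_if_even_components) auto
qed

lemma even_components_reconn_iff:
  assumes "finite I" "J \<subseteq> I" "I \<subseteq> verts H" "even_components H J"
  shows "even_components (reconn H J) (I - J) \<longleftrightarrow> even_components H I"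
proof -
  have "finite J"
    using assms(1,2) by (rule finite_subset[rotated])
  have parity: "even (card (C - J)) \<longleftrightarrow> even (card C)" if "C \<in> components (induce H I)" for C
  proof -
    have "finite C"
      using components_induce_subset[OF that] assms(1) by (rule finite_subset)
    then have "card C = card (C \<inter> J) + card (C - J)"
      by (rule card_Int_Diff)
    then show ?thesis
      using even_card_Int_component[OF \<open>finite J\<close> assms(4,2) that] by simp
  qed
  have "even_components (reconn H J) (I - J) \<longleftrightarrow> (\<forall>C\<in>components (induce H I). even (card (C - J)))"
    unfolding even_components_def components_induce_reconn[OF assms(2,3)] by auto
  also have "\<dots> \<longleftrightarrow> even_components H I"
    unfolding even_components_def using parity by blast
  finally show ?thesis .
qed

lemma connected_graph_induce_reconn:
  assumes "J \<subseteq> I" "I \<subseteq> verts H" "I - J \<noteq> {}" "connected_graph (induce H I)"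
  shows "connected_graph (induce (reconn H J) (I - J))"
  unfolding connected_graph_def
proof (intro conjI ballI)
  show "verts (induce (reconn H J) (I - J)) \<noteq> {}"
    using assms(3) by simp
  fix x y
  assume xy: "x \<in> verts (induce (reconn H J) (I - J))" "y \<in> verts (induce (reconn H J) (I - J))"
  then have "reachable (induce H I) x y"
    using assms(4) unfolding connected_graph_def by simp
  with xy show "reachable (induce (reconn H J) (I - J)) x y"
    using reachable_induce_reconnI[OF assms(1,2)] by simp
qed

lemma odd_card_Diff_even_components:
  assumes "finite I" "J \<subseteq> I" "even_components H J" "odd (card I)"
  shows "odd (card (I - J))"
proof -
  have "even (card J)"
    using finite_subset[OF assms(2,1)] assms(3) by (rule even_card_if_even_components)
  moreover have "card I = card (I \<inter> J) + card (I - J)"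
    using assms(1) by (rule card_Int_Diff)
  ultimately show ?thesis
    using assms(2,4) by (simp add: Int_absorb1)
qed

subsection \<open>The deletion formula\<close>

definition new_even_sets :: "'a graph \<Rightarrow> 'a set \<Rightarrow> 'a set \<Rightarrow> 'a set set" where
  "new_even_sets G e I = {J. J \<subseteq> I \<and> even_components (add_edge G e) J \<and> \<not> even_components G J}"

definition edge_correction :: "'a graph \<Rightarrow> 'a set \<Rightarrow> 'a set \<Rightarrow> int" where
  "edge_correction G e I =
     (\<Sum>J\<in>new_even_sets G e I. b_on G J * sa_on (reconn (add_edge G e) J) (I - J))"

lemma EC_add_edge_diff: "EC (add_edge G e) - EC G = new_even_sets G e (verts G)"
  by (auto simp: EC_eq new_even_sets_def)

lemma finite_new_even_sets: "finite I \<Longrightarrow> finite (new_even_sets G e I)"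
  by (rule finite_subset[of _ "Pow I"]) (auto simp: new_even_sets_def)

lemma new_even_sets_subset: "K \<subseteq> I \<Longrightarrow> new_even_sets G e K = {J \<in> new_even_sets G e I. J \<subseteq> K}"
  by (auto simp: new_even_sets_def)

lemma sum_supersets_Diff:
  assumes "J \<subseteq> I"
  shows "(\<Sum>K\<in>{K \<in> Pow I. J \<subseteq> K}. f (K - J)) = (\<Sum>L\<in>Pow (I - J). f L)"
  by (rule sum.reindex_bij_witness[where i = "\<lambda>L. L \<union> J" and j = "\<lambda>K. K - J"]) (use assms in auto)

lemma sum_Pow_edge_correction:
  assumes "finite I"
  shows "(\<Sum>K\<in>Pow I. edge_correction G e K) =
    (\<Sum>J\<in>new_even_sets G e I. b_on G J * b_on (reconn (add_edge G e) J) (I - J))"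
proof -
  let ?R = "reconn (add_edge G e)"
  have "(\<Sum>K\<in>Pow I. edge_correction G e K) =
      (\<Sum>K\<in>Pow I. \<Sum>J\<in>{J \<in> new_even_sets G e I. J \<subseteq> K}. b_on G J * sa_on (?R J) (K - J))"
    unfolding edge_correction_def by (intro sum.cong refl) (simp add: new_even_sets_subset)
  also have "\<dots> = (\<Sum>J\<in>new_even_sets G e I. \<Sum>K\<in>{K \<in> Pow I. J \<subseteq> K}. b_on G J * sa_on (?R J) (K - J))"
    by (rule sum.swap_restrict) (simp_all add: assms finite_new_even_sets)
  also have "\<dots> = (\<Sum>J\<in>new_even_sets G e I. b_on G J * b_on (?R J) (I - J))"
  proof (intro sum.cong refl)
    fix J
    assume "J \<in> new_even_sets G e I"
    then have "J \<subseteq> I"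
      by (simp add: new_even_sets_def)
    then show "(\<Sum>K\<in>{K \<in> Pow I. J \<subseteq> K}. b_on G J * sa_on (?R J) (K - J)) = b_on G J * b_on (?R J) (I - J)"
      unfolding b_on_def[of "?R J"] sum_supersets_Diff[OF \<open>J \<subseteq> I\<close>, symmetric]
      by (simp only: sum_distrib_left)
  qed
  finally show ?thesis .
qed

lemma edge_correction_not_even_components:
  assumes "finite I" "I \<subseteq> verts G" "\<not> even_components (add_edge G e) I"
  shows "edge_correction G e I = 0"
  unfolding edge_correction_def
proof (intro sum.neutral ballI)
  fix J
  assume "J \<in> new_even_sets G e I"
  then have "J \<subseteq> I" "even_components (add_edge G e) J"
    by (auto simp: new_even_sets_def)
  then have "\<not> even_components (reconn (add_edge G e) J) (I - J)"
    using even_components_reconn_iff[of I J "add_edge G e"] assms by simp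
  then show "b_on G J * sa_on (reconn (add_edge G e) J) (I - J) = 0"
    using sa_on_not_even_components[of "I - J"] assms(1) by simp
qed

lemma sum_new_even_sets_b_on:
  assumes "finite I" "I \<subseteq> verts G" "I \<noteq> {}" "even_components (add_edge G e) I"
  shows "(\<Sum>J\<in>new_even_sets G e I. b_on G J * b_on (reconn (add_edge G e) J) (I - J)) = b_on G I"
proof -
  have "b_on (reconn (add_edge G e) J) (I - J) = 0"
    if "J \<in> new_even_sets G e I" "J \<noteq> I" for J
  proof -
    have "J \<subseteq> I" "even_components (add_edge G e) J"
      using that(1) by (auto simp: new_even_sets_def)
    then have "even_components (reconn (add_edge G e) J) (I - J)"
      using even_components_reconn_iff[of I J "add_edge G e"] assms by simp
    moreover have "I - J \<noteq> {}"
      using that(2) \<open>J \<subseteq> I\<close> by blast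
    ultimately show ?thesis
      using b_on_even_components[of "I - J"] assms(1) by simp
  qed
  then have "(\<Sum>J\<in>new_even_sets G e I. b_on G J * b_on (reconn (add_edge G e) J) (I - J)) =
      (\<Sum>J\<in>new_even_sets G e I. if J = I then b_on G I else 0)"
    by (intro sum.cong) auto
  also have "\<dots> = b_on G I"
    using assms b_on_even_components[OF assms(1,3)]
    by (auto simp: finite_new_even_sets new_even_sets_def)
  finally show ?thesis .
qed

theorem sa_on_add_edge:
  assumes "finite (verts G)" "I \<subseteq> verts G"
  shows "sa_on (add_edge G e) I = sa_on G I - edge_correction G e I"
  using assms(2)
proof (induction "card I" arbitrary: I rule: less_induct)
  case less
  have "finite I"
    using less.prems assms(1) by (rule finite_subset)
  consider "\<not> even_components (add_edge G e) I" | "I = {}" |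
    "even_components (add_edge G e) I" "I \<noteq> {}"
    by blast
  then show ?case
  proof cases
    case 1
    then have "\<not> even_components G I"
      using even_components_add_edge[OF \<open>finite I\<close>] by blast
    with 1 show ?thesis
      using edge_correction_not_even_components[OF \<open>finite I\<close> less.prems 1]
        sa_on_not_even_components[OF \<open>finite I\<close>] by simp
  next
    case 2
    then show ?thesis
      using even_components_empty[of G] by (simp add: edge_correction_def new_even_sets_def)
  next
    case 3
    have IH: "sa_on (add_edge G e) K = sa_on G K - edge_correction G e K" if "K \<subset> I" for K
      using less.hyps[of K] that less.prems psubset_card_mono[OF \<open>finite I\<close>] by blast
    have "(\<Sum>K\<in>Pow I. sa_on (add_edge G e) K) = 0"
      using b_on_even_components[OF \<open>finite I\<close>] 3 by (simp add: b_on_def)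
    moreover have "(\<Sum>K\<in>Pow I. sa_on G K - edge_correction G e K) = 0"
      using sum_Pow_edge_correction[OF \<open>finite I\<close>] sum_new_even_sets_b_on[OF \<open>finite I\<close> less.prems 3(2,1)]
      by (simp add: sum_subtractf b_on_def)
    moreover have "(\<Sum>K\<in>{K. K \<subset> I}. sa_on (add_edge G e) K) =
        (\<Sum>K\<in>{K. K \<subset> I}. sa_on G K - edge_correction G e K)"
      using IH by (intro sum.cong) auto
    ultimately show ?thesis
      unfolding sum_Pow_eq_psubsets[OF \<open>finite I\<close>] by linarith
  qed
qed

lemma b_on_add_edge:
  assumes "finite (verts G)" "I \<subseteq> verts G"
  shows "b_on (add_edge G e) I =
    b_on G I - (\<Sum>J\<in>new_even_sets G e I. b_on G J * b_on (reconn (add_edge G e) J) (I - J))"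
proof -
  have "finite I"
    using assms by (rule finite_subset[rotated])
  have "b_on (add_edge G e) I = (\<Sum>K\<in>Pow I. sa_on G K - edge_correction G e K)"
    unfolding b_on_def using sa_on_add_edge[OF assms(1)] assms(2) by (intro sum.cong) auto
  then show ?thesis
    using sum_Pow_edge_correction[OF \<open>finite I\<close>] by (simp add: sum_subtractf b_on_def)
qed

subsection \<open>Signs\<close>

definition half_sign :: "nat \<Rightarrow> int" where
  "half_sign n = (-1) ^ (n div 2)"

lemma abs_half_sign [simp]: "\<bar>half_sign n\<bar> = 1"
  by (simp add: half_sign_def power_abs)

lemma half_sign_add_even: "even a \<Longrightarrow> half_sign (a + b) = half_sign a * half_sign b"
  by (auto simp: half_sign_def power_add elim!: evenE)

lemma half_sign_add_odd: "odd a \<Longrightarrow> odd b \<Longrightarrow> half_sign (a + b) = - (half_sign a * half_sign b)"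
proof -
  assume "odd a" "odd b"
  then have "(a + b) div 2 = a div 2 + b div 2 + 1"
    by (auto elim!: oddE)
  then show ?thesis
    by (simp add: half_sign_def power_add)
qed

lemma half_sign_mult_nonneg_eq_abs: "0 \<le> half_sign n * x \<Longrightarrow> half_sign n * x = \<bar>x\<bar>"
  by (metis abs_half_sign abs_mult abs_of_nonneg mult_1)

lemma half_sign_mult_nonpos_eq_abs: "half_sign n * x \<le> 0 \<Longrightarrow> - (half_sign n * x) = \<bar>x\<bar>"
  by (metis abs_half_sign abs_mult abs_of_nonpos mult_1)

lemma half_sign_mult_diff_sum:
  fixes y :: int and a c :: "'b \<Rightarrow> int"
  assumes "0 \<le> half_sign n * y"
    and "\<And>J. J \<in> D \<Longrightarrow> half_sign n = half_sign (m J) * half_sign (k J)"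
    and "\<And>J. J \<in> D \<Longrightarrow> half_sign (m J) * a J \<le> 0"
    and "\<And>J. J \<in> D \<Longrightarrow> 0 \<le> half_sign (k J) * c J"
  shows "half_sign n * (y - (\<Sum>J\<in>D. a J * c J)) = \<bar>y\<bar> + (\<Sum>J\<in>D. \<bar>a J\<bar> * \<bar>c J\<bar>)"
proof -
  have "- (half_sign n * (a J * c J)) = \<bar>a J\<bar> * \<bar>c J\<bar>" if "J \<in> D" for J
  proof -
    have "- (half_sign n * (a J * c J)) = - (half_sign (m J) * a J) * (half_sign (k J) * c J)"
      using assms(2)[OF that] by (simp add: algebra_simps)
    then show ?thesis
      using half_sign_mult_nonpos_eq_abs[OF assms(3)[OF that]]
        half_sign_mult_nonneg_eq_abs[OF assms(4)[OF that]] by simp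
  qed
  then show ?thesis
    using half_sign_mult_nonneg_eq_abs[OF assms(1)]
    by (simp add: right_diff_distrib sum_distrib_left flip: sum_negf)
qed

lemma component_of_add_edge_subset:
  assumes "u \<in> I" "v \<in> I"
  shows "component_of (induce (add_edge G {u, v}) I) u \<subseteq>
    component_of (induce G I) u \<union> component_of (induce G I) v"
proof
  fix y
  assume "y \<in> component_of (induce (add_edge G {u, v}) I) u"
  then have "(u, y) \<in> (adj_rel (induce (add_edge G {u, v}) I))\<^sup>*"
    by (simp add: component_of_def reachable_def)
  then show "y \<in> component_of (induce G I) u \<union> component_of (induce G I) v"
  proof (induction rule: rtrancl_induct)
    case base
    then show ?case
      using component_of_self[of u "induce G I"] assms(1) by simp
  next
    case (step y z)
    then have yz: "y \<in> I" "z \<in> I" "{y, z} = {u, v} \<or> {y, z} \<in> edges G"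
      by (auto simp: adj_rel_induce)
    show ?case
    proof (cases "{y, z} = {u, v}")
      case True
      then have "z = u \<or> z = v"
        by (metis doubleton_eq_iff)
      then show ?thesis
        using component_of_self[of u "induce G I"] component_of_self[of v "induce G I"] assms by auto
    next
      case False
      with yz have "reachable (induce G I) y z"
        by (auto simp: reachable_def adj_rel_induce)
      then have "reachable (induce G I) w y \<Longrightarrow> reachable (induce G I) w z" for w
        using reachable_trans by metis
      with step.IH show ?thesis
        unfolding component_of_def by blast
    qed
  qed
qed

lemma b_on_bridge:
  assumes "finite I" "u \<in> I" "v \<in> I" "odd (card I)"
    and "connected_graph (induce (add_edge G {u, v}) I)" "\<not> connected_graph (induce G I)"
  shows "b_on G I = 0"
proof -
  let ?Cu = "component_of (induce G I) u" and ?Cv = "component_of (induce G I) v"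
  have Cu: "?Cu \<in> components (induce G I)" and Cv: "?Cv \<in> components (induce G I)"
    using assms(2,3) by (simp_all add: components_def)
  have "component_of (induce (add_edge G {u, v}) I) u = I"
    using component_of_connected[OF assms(5)] assms(2) by simp
  then have "I \<subseteq> ?Cu \<union> ?Cv"
    using component_of_add_edge_subset[OF assms(2,3), of G] by simp
  then have I: "I = ?Cu \<union> ?Cv"
    using components_induce_subset[OF Cu] components_induce_subset[OF Cv] by blast
  have "?Cu \<noteq> ?Cv"
  proof
    assume "?Cu = ?Cv"
    then have "component_of (induce G I) u = verts (induce G I)"
      using I by simp
    then show False
      using connected_graphI[of u "induce G I"] assms(2,6) by simp
  qed
  then have disj: "?Cu \<inter> ?Cv = {}"
    by (rule component_of_disjoint)
  have fin: "finite C" if "C \<in> components (induce G I)" for C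
    using components_induce_subset[OF that] assms(1) by (rule finite_subset)
  have "separated G ?Cu ?Cv"
    by (rule separated_mono[OF component_separated[OF Cu]]) (use I disj in blast)+
  then have "b_on G I = b_on G ?Cu * b_on G ?Cv"
    using b_on_Un_separated[OF fin[OF Cu] fin[OF Cv] _ disj] I by simp
  moreover have "b_on G C = 0" if "C \<in> components (induce G I)" "even (card C)" for C
    using b_on_connected_even[OF fin[OF that(1)] components_induce_nonempty[OF that(1)]
        component_connected[OF that(1)] that(2)] .
  moreover have "even (card ?Cu) \<or> even (card ?Cv)"
    using assms(4) card_Un_disjoint[OF fin[OF Cu] fin[OF Cv] disj] I by auto
  ultimately show ?thesis
    using Cu Cv by auto
qed

lemma subset_if_new_even_set:
  assumes "even_components (add_edge G e) J" "\<not> even_components G J"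
  shows "e \<subseteq> J"
proof (rule ccontr)
  assume "\<not> e \<subseteq> J"
  then have "even_components (add_edge G e) J = even_components G J"
    by (rule even_components_add_edge_not_subset)
  with assms show False
    by simp
qed

lemma even_card_component_not_split:
  assumes "finite J" "even_components (add_edge G e) J" "C \<in> components (induce G J)"
    and "e \<subseteq> C \<or> e \<inter> C = {}"
  shows "even (card C)"
proof -
  have "separated (add_edge G e) C (J - C)"
    by (rule separated_add_edge[OF component_separated[OF assms(3)]]) (use assms(4) in blast)+
  then have "even_components (add_edge G e) C"
    using components_induce_subset[OF assms(3)] assms(2) by (rule even_components_separated)
  moreover have "finite C"
    using components_induce_subset[OF assms(3)] assms(1) by (rule finite_subset)
  ultimately show ?thesis
    by (rule even_card_if_even_components[rotated])
qed

lemma even_components_Diff_endpoint_components: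
  assumes "finite J" "even_components (add_edge G {u, v}) J" "u \<in> J" "v \<in> J"
  defines "W \<equiv> component_of (induce G J) u \<union> component_of (induce G J) v"
  shows "separated G W (J - W)" "even_components G (J - W)"
proof -
  have comps: "component_of (induce G J) x \<in> components (induce G J)" if "x \<in> J" for x
    using that by (simp add: components_def)
  show sep: "separated G W (J - W)"
    using component_separated[OF comps[OF assms(3)]] component_separated[OF comps[OF assms(4)]]
    unfolding W_def separated_def by blast
  have "u \<in> W" "v \<in> W" "W \<subseteq> J"
    using component_of_self[of u "induce G J"] component_of_self[of v "induce G J"] assms(3,4)
      components_induce_subset[OF comps[OF assms(3)]] components_induce_subset[OF comps[OF assms(4)]]
    unfolding W_def by auto
  have "components (induce G J) = components (induce G W) \<union> components (induce G (J - W))"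
    using components_Un_separated[OF sep] \<open>W \<subseteq> J\<close> by (simp add: Un_absorb1)
  show "even_components G (J - W)"
    unfolding even_components_def
  proof
    fix C
    assume C: "C \<in> components (induce G (J - W))"
    then have "C \<in> components (induce G J)"
      using \<open>components (induce G J) = _\<close> by blast
    moreover have "{u, v} \<inter> C = {}"
      using components_induce_subset[OF C] \<open>u \<in> W\<close> \<open>v \<in> W\<close> by blast
    ultimately show "even (card C)"
      by (intro even_card_component_not_split[OF assms(1,2)]) simp_all
  qed
qed

lemma odd_endpoint_components:
  assumes "finite J" "even_components (add_edge G {u, v}) J" "\<not> even_components G J"
  defines "Cu \<equiv> component_of (induce G J) u" and "Cv \<equiv> component_of (induce G J) v"
  shows "Cu \<in> components (induce G J)" "Cv \<in> components (induce G J)" "Cu \<inter> Cv = {}"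
    and "odd (card Cu)" "odd (card Cv)"
proof -
  have "u \<in> J" "v \<in> J"
    using subset_if_new_even_set[OF assms(2,3)] by simp_all
  then show Cu: "Cu \<in> components (induce G J)" and Cv: "Cv \<in> components (induce G J)"
    by (simp_all add: Cu_def Cv_def components_def)
  have u: "u \<in> Cu" and v: "v \<in> Cv"
    using \<open>u \<in> J\<close> \<open>v \<in> J\<close> component_of_self[of u "induce G J"] component_of_self[of v "induce G J"]
    by (simp_all add: Cu_def Cv_def)
  note even_if_not_split = even_card_component_not_split[OF assms(1,2)]
  have other_even: "even (card C)" if C: "C \<in> components (induce G J)" "C \<noteq> Cu" "C \<noteq> Cv" for C
  proof -
    have "u \<notin> C" "v \<notin> C"
      using component_eq_if_mem[OF C(1)] C(2,3) unfolding Cu_def Cv_def by blast+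
    then show ?thesis
      using even_if_not_split[OF C(1)] by blast
  qed
  have "Cu \<noteq> Cv"
  proof
    assume "Cu = Cv"
    then have "even (card C)" if C: "C \<in> components (induce G J)" for C
      using even_if_not_split[OF C] other_even[OF C] u v by (cases "C = Cu") auto
    with assms(3) show False
      by (simp add: even_components_def)
  qed
  then show disj: "Cu \<inter> Cv = {}"
    unfolding Cu_def Cv_def by (rule component_of_disjoint)
  have fin: "finite Cu" "finite Cv"
    using components_induce_subset[OF Cu] components_induce_subset[OF Cv] assms(1)
    by (simp_all add: finite_subset)
  have "separated G (Cu \<union> Cv) (J - (Cu \<union> Cv))"
    unfolding Cu_def Cv_def
    by (rule even_components_Diff_endpoint_components(1)[OF assms(1,2) \<open>u \<in> J\<close> \<open>v \<in> J\<close>])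
  then have "separated (add_edge G {u, v}) (Cu \<union> Cv) (J - (Cu \<union> Cv))"
    by (rule separated_add_edge) (use u v in auto)
  then have "even_components (add_edge G {u, v}) (Cu \<union> Cv)"
    by (rule even_components_separated[OF _ _ assms(2)])
      (use components_induce_subset[OF Cu] components_induce_subset[OF Cv] in blast)
  then have "even (card Cu + card Cv)"
    using even_card_if_even_components[of "Cu \<union> Cv"] card_Un_disjoint[OF fin disj] fin by simp
  moreover have "odd (card Cu) \<or> odd (card Cv)"
    using assms(3) other_even unfolding even_components_def by blast
  ultimately show "odd (card Cu)" "odd (card Cv)"
    by auto
qed

lemma half_sign_b_on_new_even_set:
  assumes "finite J" "even_components (add_edge G {u, v}) J" "\<not> even_components G J"
    and odd_connected: "\<And>C. C \<subset> J \<Longrightarrow> connected_graph (induce G C) \<Longrightarrow> odd (card C) \<Longrightarrow>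
      0 \<le> half_sign (card C) * b_on G C"
  shows "half_sign (card J) * b_on G J \<le> 0"
proof -
  let ?Cu = "component_of (induce G J) u" and ?Cv = "component_of (induce G J) v"
  let ?W = "?Cu \<union> ?Cv"
  note comps = odd_endpoint_components[OF assms(1-3)]
  have "u \<in> J" "v \<in> J"
    using subset_if_new_even_set[OF assms(2,3)] by simp_all
  note rest = even_components_Diff_endpoint_components[OF assms(1,2) this]
  have sub: "?Cu \<subseteq> J" "?Cv \<subseteq> J"
    using comps(1,2) by (simp_all add: components_induce_subset)
  have fin: "finite ?Cu" "finite ?Cv"
    using sub by (simp_all add: finite_subset[OF _ assms(1)])
  have "separated G ?Cu ?Cv"
    using component_separated[OF comps(1)] by (rule separated_mono) (use sub comps(3) in blast)+
  then have W: "b_on G ?W = b_on G ?Cu * b_on G ?Cv"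
    using b_on_Un_separated[OF fin _ comps(3)] by simp
  have J: "b_on G J = b_on G ?W * b_on G (J - ?W)"
    using b_on_Un_separated[OF _ _ rest(1)] fin assms(1) sub by (simp add: Un_absorb1)
  show ?thesis
  proof (cases "J - ?W = {}")
    case False
    then have "b_on G (J - ?W) = 0"
      using b_on_even_components[OF _ False rest(2)] assms(1) by simp
    then show ?thesis
      using J by simp
  next
    case True
    then have "J = ?W"
      using sub by blast
    have "0 \<le> half_sign (card C) * b_on G C"
      if "C \<in> components (induce G J)" "odd (card C)" "C \<noteq> J" for C
    proof -
      have "C \<subset> J"
        using components_induce_subset[OF that(1)] that(3) by blast
      then show ?thesis
        by (rule odd_connected[OF _ component_connected[OF that(1)] that(2)])
    qed
    moreover have "?Cu \<noteq> J"
      using components_induce_nonempty[OF comps(2)] comps(3) sub(2) by blast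
    moreover have "?Cv \<noteq> J"
      using components_induce_nonempty[OF comps(1)] comps(3) sub(1) by blast
    ultimately have "0 \<le> (half_sign (card ?Cu) * b_on G ?Cu) * (half_sign (card ?Cv) * b_on G ?Cv)"
      using comps(1,2,4,5) by simp
    moreover have "card J = card ?Cu + card ?Cv"
      using \<open>J = ?W\<close> card_Un_disjoint[OF fin comps(3)] by simp
    ultimately show ?thesis
      using J W True half_sign_add_odd[OF comps(4,5)] by (simp add: algebra_simps)
  qed
qed

definition pair_edges :: "'a graph \<Rightarrow> bool" where
  "pair_edges X \<longleftrightarrow> (\<forall>e\<in>edges X. \<exists>x y. e = {x, y})"

lemma pair_edges_reconn: "pair_edges (reconn H J)"
  unfolding pair_edges_def edges_reconn by blast

lemma new_even_set_nonempty: "J \<in> new_even_sets G e I \<Longrightarrow> J \<noteq> {}"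
  using even_components_empty[of G] by (auto simp: new_even_sets_def)

lemma new_even_set_half_signs:
  assumes "finite I" "J \<in> new_even_sets G {u, v} I"
    and "\<And>C. C \<subset> I \<Longrightarrow> connected_graph (induce G C) \<Longrightarrow> odd (card C) \<Longrightarrow>
      0 \<le> half_sign (card C) * b_on G C"
  shows "half_sign (card I) = half_sign (card J) * half_sign (card (I - J))"
    and "half_sign (card J) * b_on G J \<le> 0"
proof -
  have J: "J \<subseteq> I" "even_components (add_edge G {u, v}) J" "\<not> even_components G J"
    using assms(2) by (auto simp: new_even_sets_def)
  have "finite J"
    using J(1) assms(1) by (rule finite_subset)
  have "card I = card (I \<inter> J) + card (I - J)"
    using assms(1) by (rule card_Int_Diff)
  with J(1) show "half_sign (card I) = half_sign (card J) * half_sign (card (I - J))"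
    using even_card_if_even_components[OF \<open>finite J\<close> J(2)] by (simp add: Int_absorb1 half_sign_add_even)
  show "half_sign (card J) * b_on G J \<le> 0"
    using J(1) by (intro half_sign_b_on_new_even_set[OF \<open>finite J\<close> J(2,3)] assms(3)) auto
qed

lemma half_sign_sa_on_add_edge:
  assumes "finite (verts G)" "I \<subseteq> verts G"
    and "0 \<le> half_sign (card I) * sa_on G I"
    and "\<And>C. C \<subset> I \<Longrightarrow> connected_graph (induce G C) \<Longrightarrow> odd (card C) \<Longrightarrow>
      0 \<le> half_sign (card C) * b_on G C"
    and "\<And>J. J \<in> new_even_sets G {u, v} I \<Longrightarrow>
      0 \<le> half_sign (card (I - J)) * sa_on (reconn (add_edge G {u, v}) J) (I - J)"
  shows "half_sign (card I) * sa_on (add_edge G {u, v}) I = \<bar>sa_on G I\<bar> +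
    (\<Sum>J\<in>new_even_sets G {u, v} I. \<bar>b_on G J\<bar> * \<bar>sa_on (reconn (add_edge G {u, v}) J) (I - J)\<bar>)"
  unfolding sa_on_add_edge[OF assms(1,2)] edge_correction_def
  by (rule half_sign_mult_diff_sum[where m = card and k = "\<lambda>J. card (I - J)"])
    (use assms new_even_set_half_signs[OF finite_subset[OF assms(2,1)]] in auto)

lemma half_sign_b_on_add_edge:
  assumes "finite (verts G)" "I \<subseteq> verts G"
    and "0 \<le> half_sign (card I) * b_on G I"
    and "\<And>C. C \<subset> I \<Longrightarrow> connected_graph (induce G C) \<Longrightarrow> odd (card C) \<Longrightarrow>
      0 \<le> half_sign (card C) * b_on G C"
    and "\<And>J. J \<in> new_even_sets G {u, v} I \<Longrightarrow>
      0 \<le> half_sign (card (I - J)) * b_on (reconn (add_edge G {u, v}) J) (I - J)"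
  shows "half_sign (card I) * b_on (add_edge G {u, v}) I = \<bar>b_on G I\<bar> +
    (\<Sum>J\<in>new_even_sets G {u, v} I. \<bar>b_on G J\<bar> * \<bar>b_on (reconn (add_edge G {u, v}) J) (I - J)\<bar>)"
  unfolding b_on_add_edge[OF assms(1,2)]
  by (rule half_sign_mult_diff_sum[where m = card and k = "\<lambda>J. card (I - J)"])
    (use assms new_even_set_half_signs[OF finite_subset[OF assms(2,1)]] in auto)

definition half_sign_nonneg :: "'a graph \<Rightarrow> 'a set \<Rightarrow> bool" where
  "half_sign_nonneg X I \<longleftrightarrow> 0 \<le> half_sign (card I) * sa_on X I \<and>
     (connected_graph (induce X I) \<and> odd (card I) \<longrightarrow> 0 \<le> half_sign (card I) * b_on X I)"

lemma half_sign_nonneg_induce: "half_sign_nonneg (induce X I) I \<longleftrightarrow> half_sign_nonneg X I"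
proof -
  have "b_on (induce X I) I = b_on X I"
    unfolding b_on_def by (intro sum.cong) (auto simp: sa_on_induce)
  then show ?thesis
    by (simp add: half_sign_nonneg_def sa_on_induce)
qed

lemma reachable_induce_edgeless:
  assumes "\<forall>e\<in>edges X. \<not> e \<subseteq> I"
  shows "reachable (induce X I) x y \<longleftrightarrow> x \<in> I \<and> y = x"
proof -
  have "{x, y} \<notin> edges X" if "x \<in> I" "y \<in> I" for x y
  proof -
    have "{x, y} \<subseteq> I"
      using that by simp
    then show ?thesis
      using assms by blast
  qed
  then have "adj_rel (induce X I) = {}"
    by (auto simp: adj_rel_induce)
  then show ?thesis
    by (auto simp: reachable_def)
qed

lemma half_sign_nonneg_edgeless:
  assumes "finite I" "\<forall>e\<in>edges X. \<not> e \<subseteq> I"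
  shows "half_sign_nonneg X I"
proof -
  note reachable_eq = reachable_induce_edgeless[OF assms(2)]
  have sa_on: "sa_on X I = 0" if "x \<in> I" for x
  proof -
    have "component_of (induce X I) x = {x}"
      using that by (auto simp: component_of_def reachable_eq)
    then have "{x} \<in> components (induce X I)"
      using that unfolding components_def by (metis imageI verts_induce)
    then show ?thesis
      using sa_on_odd_component[OF assms(1)] by simp
  qed
  have singleton: "\<exists>x. I = {x}" if conn: "connected_graph (induce X I)"
  proof -
    have "I \<noteq> {}"
      using conn by (simp add: connected_graph_def)
    then obtain x where "x \<in> I"
      by blast
    moreover have "\<forall>y\<in>I. y = x"
      using conn \<open>x \<in> I\<close> unfolding connected_graph_def reachable_eq by simp
    ultimately have "I = {x}"
      by blast
    then show ?thesis ..
  qed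
  show ?thesis
  proof (cases "I = {}")
    case True
    then show ?thesis
      by (simp add: half_sign_nonneg_def connected_graph_def half_sign_def)
  next
    case False
    then have "sa_on X I = 0"
      using sa_on by blast
    moreover have "b_on X I = 1" "card I = 1" if conn: "connected_graph (induce X I)"
    proof -
      obtain x where "I = {x}"
        using singleton[OF conn] by blast
      then show "b_on X I = 1" "card I = 1"
        using sa_on[of x] by (simp_all add: b_on_def Pow_insert)
    qed
    ultimately show ?thesis
      by (simp add: half_sign_nonneg_def half_sign_def)
  qed
qed

lemma half_sign_b_on_add_edge_nonneg:
  assumes "finite (verts G)" "I \<subseteq> verts G" "u \<in> I" "v \<in> I"
    and conn: "connected_graph (induce (add_edge G {u, v}) I)" and odd: "odd (card I)"
    and "connected_graph (induce G I) \<Longrightarrow> 0 \<le> half_sign (card I) * b_on G I"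
    and "\<And>C. C \<subset> I \<Longrightarrow> connected_graph (induce G C) \<Longrightarrow> odd (card C) \<Longrightarrow>
      0 \<le> half_sign (card C) * b_on G C"
    and reconn: "\<And>J. J \<in> new_even_sets G {u, v} I \<Longrightarrow>
      connected_graph (induce (reconn (add_edge G {u, v}) J) (I - J)) \<Longrightarrow> odd (card (I - J)) \<Longrightarrow>
      0 \<le> half_sign (card (I - J)) * b_on (reconn (add_edge G {u, v}) J) (I - J)"
  shows "0 \<le> half_sign (card I) * b_on (add_edge G {u, v}) I"
proof -
  have "finite I"
    using assms(2,1) by (rule finite_subset)
  have "0 \<le> half_sign (card I) * b_on G I"
    using assms(7) b_on_bridge[OF \<open>finite I\<close> assms(3,4) odd conn]
    by (cases "connected_graph (induce G I)") auto
  moreover have "0 \<le> half_sign (card (I - J)) * b_on (reconn (add_edge G {u, v}) J) (I - J)"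
    if J: "J \<in> new_even_sets G {u, v} I" for J
  proof -
    have "J \<subseteq> I" "even_components (add_edge G {u, v}) J"
      using J by (auto simp: new_even_sets_def)
    then have "odd (card (I - J))"
      by (rule odd_card_Diff_even_components[OF \<open>finite I\<close> _ _ odd])
    moreover from this have "I - J \<noteq> {}"
      by (intro notI) simp
    then have "connected_graph (induce (reconn (add_edge G {u, v}) J) (I - J))"
      using \<open>J \<subseteq> I\<close> assms(2) conn by (intro connected_graph_induce_reconn) auto
    ultimately show ?thesis
      using reconn[OF J] by blast
  qed
  ultimately show ?thesis
    using half_sign_b_on_add_edge[OF assms(1,2) _ assms(8)] by (simp add: sum_nonneg)
qed

lemma half_sign_nonneg_add_edge:
  fixes G :: "'a graph"
  assumes "finite (verts G)" "I \<subseteq> verts G" "u \<in> I" "v \<in> I"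
    and "pair_edges G" "half_sign_nonneg G I"
    and smaller: "\<And>(Y :: 'a graph) K. finite K \<Longrightarrow> card K < card I \<Longrightarrow> pair_edges Y \<Longrightarrow>
      half_sign_nonneg Y K"
  shows "half_sign_nonneg (add_edge G {u, v}) I"
proof -
  let ?R = "reconn (add_edge G {u, v})"
  have "finite I"
    using assms(2,1) by (rule finite_subset)
  have odd_connected: "0 \<le> half_sign (card C) * b_on G C"
    if "C \<subset> I" "connected_graph (induce G C)" "odd (card C)" for C
    using smaller[of C G] that assms(5) \<open>finite I\<close> psubset_card_mono[OF \<open>finite I\<close>]
    by (auto simp: half_sign_nonneg_def intro: finite_subset)
  have reconn: "half_sign_nonneg (?R J) (I - J)" if "J \<in> new_even_sets G {u, v} I" for J
  proof -
    have "J \<subseteq> I" "J \<noteq> {}"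
      using that new_even_set_nonempty[OF that] by (auto simp: new_even_sets_def)
    then have "I - J \<subset> I"
      by blast
    then have "card (I - J) < card I"
      by (rule psubset_card_mono[OF \<open>finite I\<close>])
    then show ?thesis
      using smaller \<open>finite I\<close> pair_edges_reconn by blast
  qed
  have "0 \<le> half_sign (card I) * sa_on (add_edge G {u, v}) I"
    using half_sign_sa_on_add_edge[OF assms(1,2) _ odd_connected] assms(6) reconn
    unfolding half_sign_nonneg_def by (simp add: sum_nonneg)
  moreover have "0 \<le> half_sign (card I) * b_on (add_edge G {u, v}) I"
    if "connected_graph (induce (add_edge G {u, v}) I)" "odd (card I)"
    using half_sign_b_on_add_edge_nonneg[OF assms(1-4) that _ odd_connected] assms(6) reconn that(2)
    unfolding half_sign_nonneg_def by blast
  ultimately show ?thesis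
    by (simp add: half_sign_nonneg_def)
qed

lemma half_sign_nonneg_step:
  fixes X :: "'a graph"
  assumes "finite I" "pair_edges X"
    and smaller: "\<And>(Y :: 'a graph) K. finite K \<Longrightarrow> card K < card I \<Longrightarrow> pair_edges Y \<Longrightarrow>
      half_sign_nonneg Y K"
    and fewer_edges: "\<And>Y :: 'a graph. pair_edges Y \<Longrightarrow>
      card {e \<in> edges Y. e \<subseteq> I} < card {e \<in> edges X. e \<subseteq> I} \<Longrightarrow> half_sign_nonneg Y I"
  shows "half_sign_nonneg X I"
proof (cases "\<exists>e\<in>edges X. e \<subseteq> I")
  case False
  then show ?thesis
    using assms(1) by (intro half_sign_nonneg_edgeless) auto
next
  case True
  then obtain e where e: "e \<in> edges X" "e \<subseteq> I"
    by blast
  then obtain u v where uv: "e = {u, v}"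
    using assms(2) unfolding pair_edges_def by blast
  define G where "G = (I, {e' \<in> edges X. e' \<subseteq> I} - {e})"
  have G: "verts G = I" "edges G = {e' \<in> edges X. e' \<subseteq> I} - {e}"
    by (simp_all add: G_def verts_def edges_def)
  have "insert e ({e' \<in> edges X. e' \<subseteq> I} - {e}) = {e' \<in> edges X. e' \<subseteq> I}"
    using e by blast
  then have induce: "add_edge G {u, v} = induce X I"
    by (simp add: add_edge_def induce_def G flip: uv)
  have "pair_edges G"
    using assms(2) by (simp add: pair_edges_def G)
  have "half_sign_nonneg G I"
  proof (rule fewer_edges[OF \<open>pair_edges G\<close>])
    have "finite {e \<in> edges X. e \<subseteq> I}"
      by (rule finite_subset[of _ "Pow I"]) (auto simp: assms(1))
    moreover have "{e \<in> edges G. e \<subseteq> I} \<subset> {e \<in> edges X. e \<subseteq> I}"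
      using e by (auto simp: G)
    ultimately show "card {e \<in> edges G. e \<subseteq> I} < card {e \<in> edges X. e \<subseteq> I}"
      by (simp add: psubset_card_mono)
  qed
  have "u \<in> I" "v \<in> I"
    using e uv by simp_all
  have "half_sign_nonneg (add_edge G {u, v}) I"
    by (rule half_sign_nonneg_add_edge[OF _ _ \<open>u \<in> I\<close> \<open>v \<in> I\<close> \<open>pair_edges G\<close>
          \<open>half_sign_nonneg G I\<close> smaller]) (simp_all add: G assms(1))
  then show ?thesis
    by (simp add: induce half_sign_nonneg_induce)
qed

text \<open>Induction on \<open>|I|\<close> for all graphs simultaneously and, for fixed \<open>I\<close>, on the number of
  edges inside \<open>I\<close>: the reconnected complements occurring in the induction step live on
  fewer vertices but may have more edges.\<close>

theorem half_sign_nonneg_if_pair_edges: "finite I \<Longrightarrow> pair_edges X \<Longrightarrow> half_sign_nonneg X I"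
proof (induction "card I" arbitrary: X I rule: less_induct)
  case less
  note smaller = less.hyps
  show ?case
    using less.prems(2)
  proof (induction "card {e \<in> edges X. e \<subseteq> I}" arbitrary: X rule: less_induct)
    case less
    show ?case
      by (rule half_sign_nonneg_step[OF \<open>finite I\<close> less.prems smaller less.hyps]) simp_all
  qed
qed

lemma abs_sa_on_add_edge:
  assumes "pair_edges G" "finite (verts G)" "I \<subseteq> verts G"
  shows "\<bar>sa_on (add_edge G {u, v}) I\<bar> = \<bar>sa_on G I\<bar> +
    (\<Sum>J\<in>new_even_sets G {u, v} I. \<bar>b_on G J\<bar> * \<bar>sa_on (reconn (add_edge G {u, v}) J) (I - J)\<bar>)"
    (is "_ = ?rhs")
proof -
  have "finite I"
    using assms(3,2) by (rule finite_subset)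
  have "half_sign (card I) * sa_on (add_edge G {u, v}) I = ?rhs"
  proof (rule half_sign_sa_on_add_edge[OF assms(2,3)])
    show "0 \<le> half_sign (card I) * sa_on G I"
      using half_sign_nonneg_if_pair_edges[OF \<open>finite I\<close> assms(1)] by (simp add: half_sign_nonneg_def)
    show "0 \<le> half_sign (card C) * b_on G C"
      if "C \<subset> I" "connected_graph (induce G C)" "odd (card C)" for C
      using half_sign_nonneg_if_pair_edges[OF finite_subset[OF _ \<open>finite I\<close>] assms(1), of C] that
      by (simp add: half_sign_nonneg_def less_imp_le)
    show "0 \<le> half_sign (card (I - J)) * sa_on (reconn (add_edge G {u, v}) J) (I - J)" for J
      using half_sign_nonneg_if_pair_edges[of "I - J" "reconn (add_edge G {u, v}) J"]
        pair_edges_reconn[of "add_edge G {u, v}" J] \<open>finite I\<close> by (simp add: half_sign_nonneg_def)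
  qed
  moreover have "0 \<le> ?rhs"
    by (simp add: sum_nonneg)
  ultimately show ?thesis
    by (metis abs_half_sign abs_mult abs_of_nonneg mult_1)
qed

subsection \<open>Summing over the subsets of size 2i\<close>

lemma a_idx_eq_sum_abs_sa_on: "a_idx X i = (\<Sum>I\<in>{I. I \<subseteq> verts X \<and> int (card I) = 2 * i}. \<bar>sa_on X I\<bar>)"
  by (simp add: a_idx_def a_num_def sa_on_def)

lemma b_num_induce: "b_num (induce G J) = b_on G J"
  unfolding b_num_def b_on_def sa_on_def Pow_def by (intro sum.cong) auto

lemma sum_even_card_supersets:
  assumes "finite V" "J \<subseteq> V" "even (card J)"
  shows "(\<Sum>I\<in>{I \<in> {I. I \<subseteq> V \<and> int (card I) = 2 * i}. J \<subseteq> I}. f (I - J)) =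
    (\<Sum>L\<in>{L. L \<subseteq> V - J \<and> int (card L) = 2 * (i - int (card J) div 2)}. f L)"
proof (rule sum.reindex_bij_witness[where i = "\<lambda>L. L \<union> J" and j = "\<lambda>I. I - J"])
  have "finite J"
    using assms(2,1) by (rule finite_subset)
  fix I
  assume "I \<in> {I \<in> {I. I \<subseteq> V \<and> int (card I) = 2 * i}. J \<subseteq> I}"
  then have I: "I \<subseteq> V" "int (card I) = 2 * i" "J \<subseteq> I"
    by auto
  have "card I = card (I \<inter> J) + card (I - J)"
    using finite_subset[OF I(1) assms(1)] by (rule card_Int_Diff)
  then show "I - J \<in> {L. L \<subseteq> V - J \<and> int (card L) = 2 * (i - int (card J) div 2)}"
    using I assms(3) by (auto simp: Int_absorb1 elim!: evenE)
  show "I - J \<union> J = I"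
    using I(3) by blast
next
  fix L
  assume "L \<in> {L. L \<subseteq> V - J \<and> int (card L) = 2 * (i - int (card J) div 2)}"
  then have L: "L \<subseteq> V - J" "int (card L) = 2 * (i - int (card J) div 2)"
    by auto
  have "card (L \<union> J) = card L + card J"
    using L(1) finite_subset[OF L(1)] finite_subset[OF assms(2,1)] assms(1)
    by (intro card_Un_disjoint) auto
  then show "L \<union> J \<in> {I \<in> {I. I \<subseteq> V \<and> int (card I) = 2 * i}. J \<subseteq> I}"
    using L assms(2,3) by (auto elim!: evenE)
  show "L \<union> J - J = L"
    using L(1) by blast
qed simp

lemma sum_new_even_sets_a_idx:
  assumes "finite (verts G)"
  shows "(\<Sum>I\<in>{I. I \<subseteq> verts G \<and> int (card I) = 2 * i}.
      \<Sum>J\<in>new_even_sets G e I. \<bar>b_on G J\<bar> * \<bar>sa_on (reconn (add_edge G e) J) (I - J)\<bar>) =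
    (\<Sum>J\<in>new_even_sets G e (verts G).
      \<bar>b_on G J\<bar> * a_idx (reconn (add_edge G e) J) (i - int (card J) div 2))"
proof -
  let ?S = "{I. I \<subseteq> verts G \<and> int (card I) = 2 * i}" and ?R = "reconn (add_edge G e)"
  have "(\<Sum>I\<in>?S. \<Sum>J\<in>new_even_sets G e I. \<bar>b_on G J\<bar> * \<bar>sa_on (?R J) (I - J)\<bar>) =
      (\<Sum>I\<in>?S. \<Sum>J\<in>{J \<in> new_even_sets G e (verts G). J \<subseteq> I}. \<bar>b_on G J\<bar> * \<bar>sa_on (?R J) (I - J)\<bar>)"
    by (intro sum.cong refl) (simp add: new_even_sets_subset)
  also have "\<dots> = (\<Sum>J\<in>new_even_sets G e (verts G).
      \<Sum>I\<in>{I \<in> ?S. J \<subseteq> I}. \<bar>b_on G J\<bar> * \<bar>sa_on (?R J) (I - J)\<bar>)"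
    by (rule sum.swap_restrict) (auto intro: finite_subset[of _ "Pow (verts G)"] simp: assms finite_new_even_sets)
  also have "\<dots> = (\<Sum>J\<in>new_even_sets G e (verts G). \<bar>b_on G J\<bar> * a_idx (?R J) (i - int (card J) div 2))"
  proof (intro sum.cong refl)
    fix J
    assume J: "J \<in> new_even_sets G e (verts G)"
    then have J: "J \<subseteq> verts G" "even_components (add_edge G e) J"
      by (auto simp: new_even_sets_def)
    then have "even (card J)"
      using even_card_if_even_components[of J "add_edge G e"] finite_subset[OF _ assms] by simp
    have "(\<Sum>I\<in>{I \<in> ?S. J \<subseteq> I}. \<bar>sa_on (?R J) (I - J)\<bar>) = a_idx (?R J) (i - int (card J) div 2)"
      unfolding a_idx_eq_sum_abs_sa_on verts_reconn verts_add_edge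
      by (rule sum_even_card_supersets[OF assms J(1) \<open>even (card J)\<close>])
    then show "(\<Sum>I\<in>{I \<in> ?S. J \<subseteq> I}. \<bar>b_on G J\<bar> * \<bar>sa_on (?R J) (I - J)\<bar>) =
        \<bar>b_on G J\<bar> * a_idx (?R J) (i - int (card J) div 2)"
      by (simp add: sum_distrib_left[symmetric])
  qed
  finally show ?thesis .
qed

theorem mainTheorem8:
  fixes G :: "'a graph" and u v :: 'a and i :: nat
  assumes "simple_graph G"
    and "u \<in> verts G" and "v \<in> verts G" and "u \<noteq> v"
  shows "a_idx (add_edge G {u, v}) (int i) =
           a_idx G (int i) +
           (\<Sum>J\<in>EC (add_edge G {u, v}) - EC G.
              \<bar>b_num (induce G J)\<bar> *
              a_idx (reconn (add_edge G {u, v}) J) (int i - int (card J) div 2))"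
proof -
  have fin: "finite (verts G)"
    using assms(1) by (simp add: simple_graph_def)
  have pairs: "pair_edges G"
    using assms(1) unfolding simple_graph_def pair_edges_def by blast
  let ?S = "{I. I \<subseteq> verts G \<and> int (card I) = 2 * int i}"
  have "a_idx (add_edge G {u, v}) (int i) = (\<Sum>I\<in>?S. \<bar>sa_on (add_edge G {u, v}) I\<bar>)"
    by (simp add: a_idx_eq_sum_abs_sa_on)
  also have "\<dots> = (\<Sum>I\<in>?S. \<bar>sa_on G I\<bar> + (\<Sum>J\<in>new_even_sets G {u, v} I.
      \<bar>b_on G J\<bar> * \<bar>sa_on (reconn (add_edge G {u, v}) J) (I - J)\<bar>))"
    using abs_sa_on_add_edge[OF pairs fin] by (intro sum.cong) auto
  also have "\<dots> = a_idx G (int i) + (\<Sum>J\<in>new_even_sets G {u, v} (verts G).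
      \<bar>b_on G J\<bar> * a_idx (reconn (add_edge G {u, v}) J) (int i - int (card J) div 2))"
    by (simp add: sum.distrib a_idx_eq_sum_abs_sa_on sum_new_even_sets_a_idx[OF fin])
  finally show ?thesis
    by (simp add: EC_add_edge_diff b_num_induce)
qed

end
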